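(* Let $\mathcal{R}$ be a set of nontrivial rules on a finite set $Q$, and let $\mathcal{C}=\{(A\cup\{q\},q): (A,q)\in\mathcal{R}\}$. Then $\mathcal{A}(\mathcal{R})=\mathcal{L}(\mathcal{C})$.
   Context: A rule on $Q$ is a pair $(A,q)$ with $A\subseteq Q$, $q\in Q$; it is nontrivial if $q\notin A$. It accepts $X\subseteq Q$ if $q\in X$ implies $X\cap A\neq\emptyset$. $\mathcal{K}(\mathcal{R})$ is the family of subsets of $Q$ accepted by all rules of $\mathcal{R}$, and $\mathcal{A}(\mathcal{R})$ is the family of $K\in\mathcal{K}(\mathcal{R})$ for which there is a sequence $\emptyset=Y_0\subseteq Y_1\subseteq\dots\subseteq Y_k=K$ of members of $\mathcal{K}(\mathcal{R})$ with $|Y_{i+1}\setminus Y_i|=1$ for all $i$. A rooted set is a pair $(C,r)$ with $C\subseteq Q$ and $r\in C$. For a family $\mathcal{C}$ of rooted sets, $\mathcal{L}(\mathcal{C})$ is the family of subsets $X\subseteq Q$ admitting an ordering $x_1,\dots,x_k$ of the elements of $X$ such that for each $i$, whenever $(C,x_i)\in\mathcal{C}$ one has $C\cap\{x_1,\dots,x_{i-1}\}\neq\emptyset$. *)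

theory Defs
  imports Main
begin

definition rules_on :: "'a set \<Rightarrow> ('a set \<times> 'a) set \<Rightarrow> bool" where
  "rules_on Q R \<longleftrightarrow> (\<forall>(A, q) \<in> R. A \<subseteq> Q \<and> q \<in> Q)"

definition nontrivial_rule :: "('a set \<times> 'a) \<Rightarrow> bool" where
  "nontrivial_rule r \<longleftrightarrow> snd r \<notin> fst r"

definition accepts :: "('a set \<times> 'a) \<Rightarrow> 'a set \<Rightarrow> bool" where
  "accepts r X \<longleftrightarrow> (snd r \<in> X \<longrightarrow> X \<inter> fst r \<noteq> {})"

definition K_fam :: "'a set \<Rightarrow> ('a set \<times> 'a) set \<Rightarrow> 'a set set" where
  "K_fam Q R = {X. X \<subseteq> Q \<and> (\<forall>r \<in> R. accepts r X)}"

definition A_fam :: "'a set \<Rightarrow> ('a set \<times> 'a) set \<Rightarrow> 'a set set" where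
  "A_fam Q R = {K. K \<in> K_fam Q R \<and>
     (\<exists>Y :: nat \<Rightarrow> 'a set. \<exists>k. Y 0 = {} \<and> Y k = K \<and>
        (\<forall>i \<le> k. Y i \<in> K_fam Q R) \<and>
        (\<forall>i < k. Y i \<subseteq> Y (Suc i) \<and> card (Y (Suc i) - Y i) = 1))}"

text \<open>Rooted sets (C, r) with r in C; L_fam as in the paper.\<close>
definition L_fam :: "'a set \<Rightarrow> ('a set \<times> 'a) set \<Rightarrow> 'a set set" where
  "L_fam Q \<C> = {X. X \<subseteq> Q \<and>
     (\<exists>xs. distinct xs \<and> set xs = X \<and>
        (\<forall>i < length xs. \<forall>C. (C, xs ! i) \<in> \<C> \<longrightarrow> C \<inter> set (take i xs) \<noteq> {}))}"

end

theory Submission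
  imports Defs
begin

text \<open>
  A one-element-at-a-time chain \<open>{} = Y\<^sub>0 \<subseteq> \<dots> \<subseteq> Y\<^sub>k = K\<close> is the same thing as an
  enumeration \<open>x\<^sub>1, \<dots>, x\<^sub>k\<close> of \<open>K\<close> without repetitions, the \<open>Y\<^sub>i\<close> being its prefixes.
  Every prefix is accepted by a nontrivial rule \<open>(A, q)\<close> iff \<open>A\<close> meets the prefix before
  \<open>q\<close> whenever \<open>q\<close> is enumerated: if \<open>q = x\<^sub>i\<close>, the prefix up to \<open>x\<^sub>i\<close> meets \<open>A\<close>, and it
  does so already before \<open>x\<^sub>i\<close> because \<open>q \<notin> A\<close>. Since \<open>q\<close> never occurs before itself,
  this is exactly the condition imposed by the rooted set \<open>(A \<union> {q}, q)\<close>.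
\<close>

lemma one_step_chain_enumeration:
  assumes "Y 0 = {}"
    and "\<forall>i < k. Y i \<subseteq> Y (Suc i) \<and> card (Y (Suc i) - Y i) = 1"
  obtains xs where "length xs = k" "distinct xs" "\<And>i. i \<le> k \<Longrightarrow> set (take i xs) = Y i"
proof
  define xs where "xs = map (\<lambda>i. the_elem (Y (Suc i) - Y i)) [0..<k]"
  show "length xs = k" unfolding xs_def by simp
  have prefix: "set (take i xs) = Y i \<and> distinct (take i xs)" if "i \<le> k" for i
    using that
  proof (induction i)
    case 0
    then show ?case using assms(1) by simp
  next
    case (Suc i)
    then have "i < k" by simp
    with assms(2) obtain x where x: "Y (Suc i) - Y i = {x}" and "Y i \<subseteq> Y (Suc i)"
      by (metis card_1_singletonE)
    then have "Y (Suc i) = insert x (Y i)" "x \<notin> Y i" by auto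
    moreover have "take (Suc i) xs = take i xs @ [x]"
      using \<open>i < k\<close> x by (simp add: xs_def take_Suc_conv_app_nth)
    ultimately show ?case using Suc by auto
  qed
  show "distinct xs" using prefix[of k] \<open>length xs = k\<close> by simp
  show "set (take i xs) = Y i" if "i \<le> k" for i using prefix[OF that] by simp
qed

lemma nth_notin_set_take:
  assumes "distinct xs" "i < length xs"
  shows "xs ! i \<notin> set (take i xs)"
  using distinct_take[OF assms(1), of "Suc i"] assms(2) by (simp add: take_Suc_conv_app_nth)

lemma prefix_sets_one_step_chain:
  assumes "distinct xs" "i < length xs"
  shows "set (take i xs) \<subseteq> set (take (Suc i) xs)"
    and "card (set (take (Suc i) xs) - set (take i xs)) = 1"
proof -
  have "set (take (Suc i) xs) = insert (xs ! i) (set (take i xs))"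
    using assms(2) by (simp add: take_Suc_conv_app_nth)
  moreover have "insert (xs ! i) (set (take i xs)) - set (take i xs) = {xs ! i}"
    using nth_notin_set_take[OF assms] by blast
  ultimately show
    "set (take i xs) \<subseteq> set (take (Suc i) xs)"
    "card (set (take (Suc i) xs) - set (take i xs)) = 1"
    by auto
qed

lemma one_step_chain_iff_enumeration:
  "(\<exists>Y k. Y 0 = {} \<and> Y k = K \<and> (\<forall>i \<le> k. P (Y i)) \<and>
      (\<forall>i < k. Y i \<subseteq> Y (Suc i) \<and> card (Y (Suc i) - Y i) = 1))
   \<longleftrightarrow> (\<exists>xs. distinct xs \<and> set xs = K \<and> (\<forall>i \<le> length xs. P (set (take i xs))))"
proof
  assume "\<exists>Y k. Y 0 = {} \<and> Y k = K \<and> (\<forall>i \<le> k. P (Y i)) \<and>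
      (\<forall>i < k. Y i \<subseteq> Y (Suc i) \<and> card (Y (Suc i) - Y i) = 1)"
  then obtain Y k where "Y 0 = {}" "Y k = K" "\<forall>i \<le> k. P (Y i)"
    and chain: "\<forall>i < k. Y i \<subseteq> Y (Suc i) \<and> card (Y (Suc i) - Y i) = 1"
    by blast
  obtain xs where "length xs = k" "distinct xs" "\<And>i. i \<le> k \<Longrightarrow> set (take i xs) = Y i"
    using one_step_chain_enumeration[OF \<open>Y 0 = {}\<close> chain] by blast
  with \<open>Y k = K\<close> \<open>\<forall>i \<le> k. P (Y i)\<close> show
    "\<exists>xs. distinct xs \<and> set xs = K \<and> (\<forall>i \<le> length xs. P (set (take i xs)))"
    by (metis order_refl take_all)
next
  assume "\<exists>xs. distinct xs \<and> set xs = K \<and> (\<forall>i \<le> length xs. P (set (take i xs)))"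
  then obtain xs where "distinct xs" "set xs = K" "\<forall>i \<le> length xs. P (set (take i xs))"
    by blast
  with prefix_sets_one_step_chain[OF \<open>distinct xs\<close>] show
    "\<exists>Y k. Y 0 = {} \<and> Y k = K \<and> (\<forall>i \<le> k. P (Y i)) \<and>
      (\<forall>i < k. Y i \<subseteq> Y (Suc i) \<and> card (Y (Suc i) - Y i) = 1)"
    by (intro exI[of _ "\<lambda>i. set (take i xs)"] exI[of _ "length xs"]) simp
qed

lemma prefixes_accepted_iff:
  assumes "\<forall>r \<in> R. nontrivial_rule r"
  shows "(\<forall>i \<le> length xs. \<forall>r \<in> R. accepts r (set (take i xs)))
     \<longleftrightarrow> (\<forall>i < length xs. \<forall>A. (A, xs ! i) \<in> R \<longrightarrow> A \<inter> set (take i xs) \<noteq> {})"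
proof safe
  fix i A
  assume accepted: "\<forall>i \<le> length xs. \<forall>r \<in> R. accepts r (set (take i xs))"
    and "i < length xs" "(A, xs ! i) \<in> R" "A \<inter> set (take i xs) = {}"
  have "take (Suc i) xs = take i xs @ [xs ! i]"
    using \<open>i < length xs\<close> by (simp add: take_Suc_conv_app_nth)
  moreover have "xs ! i \<notin> A"
    using assms \<open>(A, xs ! i) \<in> R\<close> unfolding nontrivial_rule_def by fastforce
  moreover have "accepts (A, xs ! i) (set (take (Suc i) xs))"
    using accepted \<open>i < length xs\<close> \<open>(A, xs ! i) \<in> R\<close> by simp
  ultimately show False
    using \<open>A \<inter> set (take i xs) = {}\<close> unfolding accepts_def by auto
next
  fix i A q
  assume early: "\<forall>i < length xs. \<forall>A. (A, xs ! i) \<in> R \<longrightarrow> A \<inter> set (take i xs) \<noteq> {}"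
    and "i \<le> length xs" "(A, q) \<in> R"
  show "accepts (A, q) (set (take i xs))"
    unfolding accepts_def
  proof
    assume "snd (A, q) \<in> set (take i xs)"
    then obtain j where "j < i" "j < length xs" "q = xs ! j"
      by (auto simp: in_set_conv_nth)
    with early \<open>(A, q) \<in> R\<close> have "A \<inter> set (take j xs) \<noteq> {}" by blast
    moreover have "set (take j xs) \<subseteq> set (take i xs)"
      using \<open>j < i\<close> by (simp add: set_take_subset_set_take)
    ultimately show "set (take i xs) \<inter> fst (A, q) \<noteq> {}" by auto
  qed
qed

lemma rooted_sets_condition_iff:
  assumes "distinct xs"
  shows "(\<forall>i < length xs. \<forall>C. (C, xs ! i) \<in> {(A \<union> {q}, q) | A q. (A, q) \<in> R}
            \<longrightarrow> C \<inter> set (take i xs) \<noteq> {})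
     \<longleftrightarrow> (\<forall>i < length xs. \<forall>A. (A, xs ! i) \<in> R \<longrightarrow> A \<inter> set (take i xs) \<noteq> {})"
proof -
  have rooted: "(C, x) \<in> {(A \<union> {q}, q) | A q. (A, q) \<in> R} \<longleftrightarrow> (\<exists>A. C = A \<union> {x} \<and> (A, x) \<in> R)"
    for C x by blast
  have "(\<forall>C. (C, xs ! i) \<in> {(A \<union> {q}, q) | A q. (A, q) \<in> R} \<longrightarrow> C \<inter> set (take i xs) \<noteq> {})
      \<longleftrightarrow> (\<forall>A. (A, xs ! i) \<in> R \<longrightarrow> A \<inter> set (take i xs) \<noteq> {})" if "i < length xs" for i
    using nth_notin_set_take[OF assms that] unfolding rooted by blast
  then show ?thesis by simp
qed

lemma prefixes_in_K_fam_iff: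
  assumes "\<forall>r \<in> R. nontrivial_rule r"
  shows "(\<forall>i \<le> length xs. set (take i xs) \<in> K_fam Q R)
     \<longleftrightarrow> set xs \<subseteq> Q \<and> (\<forall>i < length xs. \<forall>A. (A, xs ! i) \<in> R \<longrightarrow> A \<inter> set (take i xs) \<noteq> {})"
proof -
  have "(\<forall>i \<le> length xs. set (take i xs) \<subseteq> Q) \<longleftrightarrow> set xs \<subseteq> Q"
    by (metis order_refl order_trans set_take_subset take_all)
  then show ?thesis
    unfolding K_fam_def using prefixes_accepted_iff[OF assms, of xs] by auto
qed

theorem theorem2p4:
  fixes Q :: "'a set" and R :: "('a set \<times> 'a) set"
  assumes "finite Q"
    and "rules_on Q R"
    and "\<forall>r \<in> R. nontrivial_rule r"
  shows "A_fam Q R = L_fam Q {(A \<union> {q}, q) | A q. (A, q) \<in> R}"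
proof (intro set_eqI)
  fix K
  have "K \<in> A_fam Q R \<longleftrightarrow> K \<in> K_fam Q R \<and>
      (\<exists>xs. distinct xs \<and> set xs = K \<and> (\<forall>i \<le> length xs. set (take i xs) \<in> K_fam Q R))"
    unfolding A_fam_def mem_Collect_eq
    using one_step_chain_iff_enumeration[of K "\<lambda>Y. Y \<in> K_fam Q R"] by simp
  also have "\<dots> \<longleftrightarrow>
      (\<exists>xs. distinct xs \<and> set xs = K \<and> (\<forall>i \<le> length xs. set (take i xs) \<in> K_fam Q R))"
    by (metis order_refl take_all)
  also have "\<dots> \<longleftrightarrow> (\<exists>xs. distinct xs \<and> set xs = K \<and> set xs \<subseteq> Q \<and>
      (\<forall>i < length xs. \<forall>C. (C, xs ! i) \<in> {(A \<union> {q}, q) | A q. (A, q) \<in> R}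
            \<longrightarrow> C \<inter> set (take i xs) \<noteq> {}))"
    by (simp only: prefixes_in_K_fam_iff[OF assms(3)] rooted_sets_condition_iff cong: conj_cong)
  also have "\<dots> \<longleftrightarrow> K \<in> L_fam Q {(A \<union> {q}, q) | A q. (A, q) \<in> R}"
    unfolding L_fam_def by blast
  finally show "K \<in> A_fam Q R \<longleftrightarrow> K \<in> L_fam Q {(A \<union> {q}, q) | A q. (A, q) \<in> R}" .
qed

end
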